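(* In the i.i.d. setting below, assume [B1], [B2], [B3] and [B5]. Then, as $n\to\infty$, $$P\Big(\min_{a\in\mathbb A}\sum_{i\in\mathbb G^0}1_{\{X^i\in a\}}Y^i_\tau>n^{1-\bar d\theta-\delta'}\Big)\to1\quad\text{and}\quad P\Big(\max_{a\in\mathbb A}\sum_{i\in\mathbb G^1}1_{\{X^i\in a\}}<n^{1-\bar d\theta-\delta}\Big)\to1$$ for any constants $0<\delta'<\delta<(1-\bar d\theta)\wedge(1-\beta)$. Consequently $P\big[\inf_{i\in G^1}\sum_{j\in G^0}1_{\{X^j\in a^i\}}Y^j_\tau=0\big]\to0$ and $\sup_{t\in[0,\tau],i\in G^0}w^i_t\to^p0$ (i.e. conditions [A3] and [A4] hold).
   Context: For each $n\in\mathbb N$, $\mathbb G=\{1,\dots,n\}$ and each $i$ has a survival time $T^i>0$, censoring time $U^i>0$, covariate $X^i\in\mathbb R^d$ and assignment $Z^i\in\{0,1\}$; the vectors $V^i=(X^i,Z^i,T^i,U^i)$, $i=1,\dots,n$, are i.i.d. for each $n$, and for each $z$ the conditional law of $(X^1,T^1,U^1)$ given $Z^1=z$ does not depend on $n$. Put $\widetilde T^i=T^i\wedge U^i$, $\mathbb G^z=\{i:Z^i=z\}$, $Y^i_t=1_{\{\widetilde T^i\ge t\}}$. Fix $\tau>0$, a compact $\mathcal X\subset\mathbb R^d$ and, for each $n$, a finite partition $\mathbb A$ of $\mathcal X$ into measurable sets; $d_n=\max_{a\in\mathbb A}\mathrm{diam}(a)$. Let $\mathcal P=\{(i,j)\in\mathbb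 G^1\times\mathbb G^0:\ X^i,X^j\in a\text{ for some }a\in\mathbb A\}$, $G^1$ (resp. $G^0$) the set of first (resp. second) coordinates of elements of $\mathcal P$. For $X^i\in\mathcal X$, $a^i$ is the cell of $\mathbb A$ containing $X^i$. $x^-=x^{-1}$ if $x\ne0$, $0^-=0$. Weights: $w^i_t=1$ if $i\in G^1$; $w^i_t=\big(\sum_{j\in\mathbb G^0}1_{\{X^j\in a^i\}}Y^j_t\big)^-\sum_{i'\in\mathbb G^1}1_{\{X^{i'}\in a^i\}}Y^{i'}_t$ if $i\in G^0$; $0$ otherwise. $a_n\lesssim b_n$ means $a_n\le Cb_n$ for a constant $C>0$ and all $n$; $a_n\asymp b_n$ means both $\lesssim$ and $\gtrsim$. [B1]: constants $\beta,\theta\in(0,1)$ and $\bar d\in\{1,\dots,d\}$ satisfy $\beta<2\theta$ and $\bar d\theta<1$. [B2]: $P(Z^1=1)\asymp n^{\beta-1}$. [B3]: the conditional law of $X^1$ given $Z^1=z$ has a density $f(\cdot\mid z)$ w.r.t. a $\sigma$-finite measure $\nu$ on $\mathbb R^d$ with $\nu(\mathcal X)<\infty$, and $\operatorname{ess\,sup}_{x\in\mathcal X}f(x\mid1)<\infty$, $\operatorname{ess\,inf}_{x\in\mathcal X}\big(f(x\mid0)E[Y^1_\tau\mid X^1=x,Z^1=0]\big)>0$ (w.r.t. $\nu$). [B5]: $d_n=O(n^{-\theta})$ and $n^{-\bar d\theta}\lesssim\min_{a\in\mathbb A}\nu(a)\le\max_{a\in\mathbb A}\nu(a)\lesssim n^{-\bar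 d\theta}$. *)

theory Defs
  imports "HOL-Probability.Probability"
begin

definition unit_law ::
  "real \<Rightarrow> ('a::euclidean_space \<times> real \<times> real) measure \<Rightarrow> ('a \<times> real \<times> real) measure
     \<Rightarrow> (bool \<times> 'a \<times> real \<times> real) measure" where
  "unit_law p Q0 Q1 =
     measure_pmf (bernoulli_pmf p) \<bind>
       (\<lambda>z. distr (if z then Q1 else Q0) (count_space UNIV \<Otimes>\<^sub>M borel) (Pair z))"

definition sample_space ::
  "nat \<Rightarrow> real \<Rightarrow> ('a::euclidean_space \<times> real \<times> real) measure \<Rightarrow> ('a \<times> real \<times> real) measure
     \<Rightarrow> (nat \<Rightarrow> bool \<times> 'a \<times> real \<times> real) measure" where
  "sample_space n p Q0 Q1 = PiM {1..n} (\<lambda>_. unit_law p Q0 Q1)"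

definition Zv :: "(nat \<Rightarrow> bool \<times> 'a \<times> real \<times> real) \<Rightarrow> nat \<Rightarrow> bool" where
  "Zv \<omega> i = fst (\<omega> i)"
definition Xv :: "(nat \<Rightarrow> bool \<times> 'a \<times> real \<times> real) \<Rightarrow> nat \<Rightarrow> 'a" where
  "Xv \<omega> i = fst (snd (\<omega> i))"
definition Tv :: "(nat \<Rightarrow> bool \<times> 'a \<times> real \<times> real) \<Rightarrow> nat \<Rightarrow> real" where
  "Tv \<omega> i = fst (snd (snd (\<omega> i)))"
definition Uv :: "(nat \<Rightarrow> bool \<times> 'a \<times> real \<times> real) \<Rightarrow> nat \<Rightarrow> real" where
  "Uv \<omega> i = snd (snd (snd (\<omega> i)))"

definition Yv :: "(nat \<Rightarrow> bool \<times> 'a \<times> real \<times> real) \<Rightarrow> nat \<Rightarrow> real \<Rightarrow> real" where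
  "Yv \<omega> i t = of_bool (t \<le> min (Tv \<omega> i) (Uv \<omega> i))"

definition grp :: "(nat \<Rightarrow> bool \<times> 'a \<times> real \<times> real) \<Rightarrow> nat \<Rightarrow> bool \<Rightarrow> nat set" where
  "grp \<omega> n z = {i \<in> {1..n}. Zv \<omega> i = z}"

definition matched_pairs ::
  "'a set set \<Rightarrow> (nat \<Rightarrow> bool \<times> 'a \<times> real \<times> real) \<Rightarrow> nat \<Rightarrow> (nat \<times> nat) set" where
  "matched_pairs A \<omega> n = {(i, j). i \<in> grp \<omega> n True \<and> j \<in> grp \<omega> n False \<and>
                            (\<exists>a\<in>A. Xv \<omega> i \<in> a \<and> Xv \<omega> j \<in> a)}"
definition G1 :: "'a set set \<Rightarrow> (nat \<Rightarrow> bool \<times> 'a \<times> real \<times> real) \<Rightarrow> nat \<Rightarrow> nat set" where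
  "G1 A \<omega> n = fst ` matched_pairs A \<omega> n"
definition G0 :: "'a set set \<Rightarrow> (nat \<Rightarrow> bool \<times> 'a \<times> real \<times> real) \<Rightarrow> nat \<Rightarrow> nat set" where
  "G0 A \<omega> n = snd ` matched_pairs A \<omega> n"

definition cell :: "'a set set \<Rightarrow> 'a \<Rightarrow> 'a set" where
  "cell A x = (THE a. a \<in> A \<and> x \<in> a)"

definition ginv :: "real \<Rightarrow> real" where
  "ginv x = (if x = 0 then 0 else 1 / x)"

definition weight ::
  "'a set set \<Rightarrow> (nat \<Rightarrow> bool \<times> 'a \<times> real \<times> real) \<Rightarrow> nat \<Rightarrow> nat \<Rightarrow> real \<Rightarrow> real" where
  "weight A \<omega> n i t =
     (if i \<in> G1 A \<omega> n then 1
      else if i \<in> G0 A \<omega> n then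
        ginv (\<Sum>j\<in>grp \<omega> n False. of_bool (Xv \<omega> j \<in> cell A (Xv \<omega> i)) * Yv \<omega> j t)
        * (\<Sum>i'\<in>grp \<omega> n True. of_bool (Xv \<omega> i' \<in> cell A (Xv \<omega> i)) * Yv \<omega> i' t)
      else 0)"

text \<open>h is a version of x |-> E[Y_tau | X = x] under the law Q of (X,T,U):
  for every Borel B, Q(X in B, min(T,U) >= tau) = integral over B of h d(law of X).\<close>
definition cond_surv_version ::
  "('a::euclidean_space \<times> real \<times> real) measure \<Rightarrow> real \<Rightarrow> ('a \<Rightarrow> real) \<Rightarrow> bool" where
  "cond_surv_version Q \<tau> h \<longleftrightarrow>
     h \<in> borel_measurable borel \<and> (\<forall>x. 0 \<le> h x \<and> h x \<le> 1) \<and>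
     (\<forall>B\<in>sets borel.
        measure Q {v \<in> space Q. fst v \<in> B \<and> \<tau> \<le> min (fst (snd v)) (snd (snd v))}
        = (\<integral>x. indicator B x * h x \<partial>(distr Q borel fst)))"

end

theory Submission
  imports Defs "HOL-Real_Asymp.Real_Asymp"
begin

text \<open>
  Within each cell \<open>a\<close> the units land independently, so the number of controls at risk in
  \<open>a\<close> and the number of treated units in \<open>a\<close> are binomial counts. By [B3] and [B5] the first
  has mean of order \<open>n powr (1 - d\<theta>)\<close>; by [B2] the second has mean of order at most
  \<open>n powr (\<beta> - d\<theta>)\<close>, smaller by the factor \<open>n powr (1 - \<beta>)\<close>. Chernoff bounds make a single
  cell fail with probability \<open>exp (- c n powr (1 - d\<theta> - \<delta>))\<close> at worst, which beats the
  \<open>O(n powr d\<theta>)\<close> cells in a union bound. On the resulting events every cell of a matched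
  treated unit contains controls at risk, and every control weight is a ratio of at most
  \<open>n powr (1 - d\<theta> - \<delta>)\<close> to more than \<open>n powr (1 - d\<theta> - \<delta>')\<close>, hence tends to 0.
\<close>

section \<open>Chernoff bounds for sums of indicators\<close>

lemma chernoff_bound_01:
  fixes N :: "'b measure" and g :: "'b \<Rightarrow> real" and I :: "'i set"
  assumes N: "prob_space N" and g_meas: "g \<in> borel_measurable N"
    and g01: "\<And>x. g x = 0 \<or> g x = 1" and I: "finite I"
  shows "measure (PiM I (\<lambda>_. N)) {\<omega> \<in> space (PiM I (\<lambda>_. N)). k \<le> (\<Sum>i\<in>I. s * g (\<omega> i))}
     \<le> exp (- k + (exp s - 1) * real (card I) * (\<integral>x. g x \<partial>N))"
proof -
  interpret N: prob_space N by (rule N)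
  interpret P: product_sigma_finite "\<lambda>_. N" by unfold_locales
  let ?M = "PiM I (\<lambda>_. N)"
  interpret M: prob_space ?M by (rule prob_space_PiM) (rule N)
  define q where "q = (\<integral>x. g x \<partial>N)"
  have g_bound: "0 \<le> g x \<and> g x \<le> 1" for x
    using g01[of x] by auto
  have g_int: "integrable N g"
    by (rule N.integrable_const_bound[where B=1]) (use g_bound g_meas in auto)
  have q01: "0 \<le> q" "q \<le> 1"
    unfolding q_def using g_bound g_int N.integral_le_const[of g 1]
    by (auto intro!: integral_nonneg_AE)
  have exp_linear: "exp (s * g x) = 1 + (exp s - 1) * g x" for x
    using g01[of x] by auto
  have exp_int: "integrable N (\<lambda>x. exp (s * g x))"
    unfolding exp_linear using g_int by auto
  have exp_moment: "(\<integral>x. exp (s * g x) \<partial>N) = 1 + (exp s - 1) * q"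
    unfolding exp_linear q_def using g_int by (simp add: N.prob_space)
  let ?u = "\<lambda>\<omega>. exp (- k) * (\<Prod>i\<in>I. exp (s * g (\<omega> i)))"
  have u_int: "integrable ?M ?u"
    by (intro integrable_mult_right P.product_integrable_prod I) (use exp_int in auto)
  have "{\<omega> \<in> space ?M. k \<le> (\<Sum>i\<in>I. s * g (\<omega> i))} = {\<omega> \<in> space ?M. 1 \<le> ?u \<omega>}"
    using I by (auto simp: exp_sum[symmetric] exp_add[symmetric])
  also have "measure ?M \<dots> \<le> (\<integral>\<omega>. ?u \<omega> \<partial>?M) / 1"
    by (rule integral_Markov_inequality_measure[OF u_int, where A="space ?M"])
       (auto intro!: AE_I2 prod_nonneg mult_nonneg_nonneg)
  also have "\<dots> = exp (- k) * (1 + (exp s - 1) * q) ^ card I"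
    using P.product_integral_prod[OF I, of "\<lambda>_ x. exp (s * g x)"] exp_int
    by (simp add: exp_moment)
  also have "\<dots> \<le> exp (- k) * exp ((exp s - 1) * q) ^ card I"
  proof -
    have "0 \<le> (1 - q) + exp s * q"
      using q01 by simp
    then have "0 \<le> 1 + (exp s - 1) * q"
      by (simp add: algebra_simps)
    then show ?thesis
      using exp_ge_add_one_self[of "(exp s - 1) * q"]
      by (intro mult_left_mono power_mono) (auto simp: add.commute)
  qed
  also have "\<dots> = exp (- k + (exp s - 1) * real (card I) * q)"
    by (simp add: exp_of_nat_mult[symmetric] exp_add[symmetric] algebra_simps)
  finally show ?thesis unfolding q_def .
qed

section \<open>The sampling model\<close>

lemma sets_unit_law:
  "sets (unit_law p Q0 Q1) = sets (count_space (UNIV::bool set) \<Otimes>\<^sub>M (borel :: ('a::euclidean_space \<times> real \<times> real) measure))"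
  unfolding unit_law_def by (rule sets_bind) simp_all

context
  fixes Q0 Q1 :: "('a::euclidean_space \<times> real \<times> real) measure" and p :: real
  assumes Q0: "prob_space Q0" "sets Q0 = sets borel" and Q1: "prob_space Q1" "sets Q1 = sets borel"
    and p: "0 \<le> p" "p \<le> 1"
begin

private abbreviation (input) kernel where
  "kernel z \<equiv> distr (if z then Q1 else Q0) (count_space UNIV \<Otimes>\<^sub>M borel) (Pair z)"

private lemma space_Q: "space Q0 = UNIV" "space Q1 = UNIV"
  using sets_eq_imp_space_eq[OF Q0(2)] sets_eq_imp_space_eq[OF Q1(2)] by simp_all

private lemma measurable_Pair_unit: "Pair z \<in> measurable (if z then Q1 else Q0) (count_space UNIV \<Otimes>\<^sub>M borel)"
proof -
  have "sets (if z then Q1 else Q0) = sets borel" using Q0(2) Q1(2) by simp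
  then have "(\<lambda>x. (z, x)) \<in> measurable (if z then Q1 else Q0) (count_space UNIV \<Otimes>\<^sub>M borel)"
    by (intro measurable_Pair measurable_const measurable_ident_sets) auto
  then show ?thesis by simp
qed

private lemma prob_space_kernel: "prob_space (kernel z)"
proof -
  have "prob_space (if z then Q1 else Q0)" using Q0(1) Q1(1) by simp
  from prob_space.prob_space_distr[OF this measurable_Pair_unit] show ?thesis .
qed

private lemma kernel_measurable:
  "kernel \<in> measurable (measure_pmf (bernoulli_pmf p)) (subprob_algebra (count_space UNIV \<Otimes>\<^sub>M borel))"
  unfolding measurable_pmf_measure1 space_subprob_algebra
  using prob_space_imp_subprob_space[OF prob_space_kernel] by auto

lemma prob_space_unit_law: "prob_space (unit_law p Q0 Q1)"
  unfolding unit_law_def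
  by (rule measure_pmf.prob_space_bind[OF AE_I2 kernel_measurable]) (rule prob_space_kernel)

lemma measure_unit_law:
  assumes E: "E \<in> sets (count_space UNIV \<Otimes>\<^sub>M borel)"
  shows "measure (unit_law p Q0 Q1) E
           = p * measure Q1 (Pair True -` E) + (1 - p) * measure Q0 (Pair False -` E)"
proof -
  interpret Q0: prob_space Q0 by (rule Q0(1))
  interpret Q1: prob_space Q1 by (rule Q1(1))
  have kernel_E: "emeasure (kernel z) E = emeasure (if z then Q1 else Q0) (Pair z -` E)" for z
    using emeasure_distr[OF measurable_Pair_unit E] space_Q by simp
  have "emeasure (unit_law p Q0 Q1) E = (\<integral>\<^sup>+z. emeasure (kernel z) E \<partial>measure_pmf (bernoulli_pmf p))"
    unfolding unit_law_def by (rule emeasure_bind[OF _ kernel_measurable E]) simp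
  also have "\<dots> = (\<Sum>z\<in>UNIV. emeasure (kernel z) E * pmf (bernoulli_pmf p) z)"
    by (rule nn_integral_measure_pmf_support) auto
  also have "\<dots> = ennreal (measure Q1 (Pair True -` E)) * ennreal p
                   + ennreal (measure Q0 (Pair False -` E)) * ennreal (1 - p)"
  proof -
    have sum_bool: "(\<Sum>z\<in>UNIV. F z) = F True + F False" for F :: "bool \<Rightarrow> ennreal"
      by (simp add: UNIV_bool add.commute)
    have "emeasure (kernel True) E = ennreal (measure Q1 (Pair True -` E))"
      using kernel_E[of True] by (simp add: Q1.emeasure_eq_measure)
    moreover have "emeasure (kernel False) E = ennreal (measure Q0 (Pair False -` E))"
      using kernel_E[of False] by (simp add: Q0.emeasure_eq_measure)
    ultimately show ?thesis
      using p unfolding sum_bool by simp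
  qed
  also have "\<dots> = ennreal (p * measure Q1 (Pair True -` E) + (1 - p) * measure Q0 (Pair False -` E))"
    using p by (simp add: mult.commute flip: ennreal_mult'' ennreal_plus)
  finally show ?thesis
    using p by (simp add: measure_def del: ennreal_plus)
qed

lemma prob_space_sample_space: "prob_space (sample_space n p Q0 Q1)"
  unfolding sample_space_def by (intro prob_space_PiM prob_space_unit_law)

end

definition control_at_risk_units :: "'a set \<Rightarrow> real \<Rightarrow> (bool \<times> 'a \<times> real \<times> real) set" where
  "control_at_risk_units a t =
     {v. \<not> fst v \<and> fst (snd v) \<in> a \<and> t \<le> min (fst (snd (snd v))) (snd (snd (snd v)))}"

definition treated_units :: "'a set \<Rightarrow> (bool \<times> 'a \<times> real \<times> real) set" where
  "treated_units a = {v. fst v \<and> fst (snd v) \<in> a}"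

definition control_at_risk_count ::
  "'a set \<Rightarrow> real \<Rightarrow> (nat \<Rightarrow> bool \<times> 'a \<times> real \<times> real) \<Rightarrow> nat \<Rightarrow> real" where
  "control_at_risk_count a t \<omega> n = (\<Sum>i\<in>grp \<omega> n False. of_bool (Xv \<omega> i \<in> a) * Yv \<omega> i t)"

definition treated_count :: "'a set \<Rightarrow> (nat \<Rightarrow> bool \<times> 'a \<times> real \<times> real) \<Rightarrow> nat \<Rightarrow> real" where
  "treated_count a \<omega> n = (\<Sum>i\<in>grp \<omega> n True. of_bool (Xv \<omega> i \<in> a))"

lemma sets_control_at_risk_units:
  fixes a :: "'a::euclidean_space set"
  assumes "a \<in> sets borel"
  shows "control_at_risk_units a t \<in> sets (count_space UNIV \<Otimes>\<^sub>M borel)"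
proof -
  have "{v \<in> space (count_space UNIV \<Otimes>\<^sub>M borel). v \<in> control_at_risk_units a t}
          \<in> sets (count_space (UNIV :: bool set) \<Otimes>\<^sub>M (borel :: ('a \<times> real \<times> real) measure))"
    using assms unfolding control_at_risk_units_def borel_prod[symmetric] by measurable
  then show ?thesis by (simp add: space_pair_measure)
qed

lemma sets_treated_units:
  fixes a :: "'a::euclidean_space set"
  assumes "a \<in> sets borel"
  shows "treated_units a \<in> sets (count_space UNIV \<Otimes>\<^sub>M borel)"
proof -
  have "{v \<in> space (count_space UNIV \<Otimes>\<^sub>M borel). v \<in> treated_units a}
          \<in> sets (count_space (UNIV :: bool set) \<Otimes>\<^sub>M (borel :: ('a \<times> real \<times> real) measure))"
    using assms unfolding treated_units_def borel_prod[symmetric] by measurable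
  then show ?thesis by (simp add: space_pair_measure)
qed

lemma control_at_risk_count_eq:
  "control_at_risk_count a t \<omega> n = (\<Sum>i\<in>{1..n}. indicator (control_at_risk_units a t) (\<omega> i))"
  unfolding control_at_risk_count_def grp_def
  by (subst sum.inter_filter, simp, rule sum.cong)
     (auto simp: indicator_def control_at_risk_units_def Zv_def Xv_def Yv_def Tv_def Uv_def)

lemma treated_count_eq:
  "treated_count a \<omega> n = (\<Sum>i\<in>{1..n}. indicator (treated_units a) (\<omega> i))"
  unfolding treated_count_def grp_def
  by (subst sum.inter_filter, simp, rule sum.cong)
     (auto simp: indicator_def treated_units_def Zv_def Xv_def)

lemma borel_measurable_sample_count:
  assumes "E \<in> sets (count_space UNIV \<Otimes>\<^sub>M borel)"
  shows "(\<lambda>\<omega>. \<Sum>i\<in>{1..n}. indicator E (\<omega> i) :: real) \<in> borel_measurable (sample_space n p Q0 Q1)"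
proof -
  have "E \<in> sets (unit_law p Q0 Q1)" using assms sets_unit_law by blast
  then show ?thesis unfolding sample_space_def by measurable
qed

lemma borel_measurable_control_at_risk_count:
  fixes a :: "'a::euclidean_space set"
  assumes "a \<in> sets borel"
  shows "(\<lambda>\<omega>. control_at_risk_count a t \<omega> n) \<in> borel_measurable (sample_space n p Q0 Q1)"
  unfolding control_at_risk_count_eq
  by (rule borel_measurable_sample_count[OF sets_control_at_risk_units[OF assms]])

lemma borel_measurable_treated_count:
  fixes a :: "'a::euclidean_space set"
  assumes "a \<in> sets borel"
  shows "(\<lambda>\<omega>. treated_count a \<omega> n) \<in> borel_measurable (sample_space n p Q0 Q1)"
  unfolding treated_count_eq by (rule borel_measurable_sample_count[OF sets_treated_units[OF assms]])

lemma sets_Collect_Ball_control_at_risk_count: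
  fixes A :: "'a::euclidean_space set set"
  assumes "finite A" "\<And>a. a \<in> A \<Longrightarrow> a \<in> sets borel"
  shows "{\<omega> \<in> space (sample_space n p Q0 Q1). \<forall>a\<in>A. k < control_at_risk_count a t \<omega> n}
           \<in> sets (sample_space n p Q0 Q1)"
proof (rule sets.sets_Collect_finite_All[OF _ assms(1)])
  fix a assume "a \<in> A"
  with borel_measurable_control_at_risk_count[OF assms(2)]
  show "{\<omega> \<in> space (sample_space n p Q0 Q1). k < control_at_risk_count a t \<omega> n} \<in> sets (sample_space n p Q0 Q1)"
    by measurable
qed

lemma sets_Collect_Ball_treated_count:
  fixes A :: "'a::euclidean_space set set"
  assumes "finite A" "\<And>a. a \<in> A \<Longrightarrow> a \<in> sets borel"
  shows "{\<omega> \<in> space (sample_space n p Q0 Q1). \<forall>a\<in>A. treated_count a \<omega> n < k}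
           \<in> sets (sample_space n p Q0 Q1)"
proof (rule sets.sets_Collect_finite_All[OF _ assms(1)])
  fix a assume "a \<in> A"
  with borel_measurable_treated_count[OF assms(2)]
  show "{\<omega> \<in> space (sample_space n p Q0 Q1). treated_count a \<omega> n < k} \<in> sets (sample_space n p Q0 Q1)"
    by measurable
qed

context
  fixes Q0 Q1 :: "('a::euclidean_space \<times> real \<times> real) measure" and p :: real
  assumes Q0: "prob_space Q0" "sets Q0 = sets borel" and Q1: "prob_space Q1" "sets Q1 = sets borel"
    and p: "0 \<le> p" "p \<le> 1"
begin

lemma measure_unit_law_control_at_risk_units:
  assumes "a \<in> sets borel"
  shows "measure (unit_law p Q0 Q1) (control_at_risk_units a t)
           = (1 - p) * measure Q0 {v \<in> space Q0. fst v \<in> a \<and> t \<le> min (fst (snd v)) (snd (snd v))}"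
  using measure_unit_law[OF Q0 Q1 p sets_control_at_risk_units[OF assms]]
        sets_eq_imp_space_eq[OF Q0(2)]
  by (simp add: control_at_risk_units_def vimage_def)

lemma measure_unit_law_treated_units:
  assumes "a \<in> sets borel"
  shows "measure (unit_law p Q0 Q1) (treated_units a) = p * measure Q1 {v \<in> space Q1. fst v \<in> a}"
  using measure_unit_law[OF Q0 Q1 p sets_treated_units[OF assms]] sets_eq_imp_space_eq[OF Q1(2)]
  by (simp add: treated_units_def vimage_def)

lemma sample_count_lower_tail:
  assumes "E \<in> sets (count_space UNIV \<Otimes>\<^sub>M borel)"
  shows "measure (sample_space n p Q0 Q1)
           {\<omega> \<in> space (sample_space n p Q0 Q1). (\<Sum>i\<in>{1..n}. indicator E (\<omega> i)) \<le> k}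
         \<le> exp (k - (1 - exp (- 1)) * real n * measure (unit_law p Q0 Q1) E)"
proof -
  have E: "E \<in> sets (unit_law p Q0 Q1)" using assms sets_unit_law by blast
  have "{\<omega> \<in> space (sample_space n p Q0 Q1). (\<Sum>i\<in>{1..n}. indicator E (\<omega> i)) \<le> k}
      = {\<omega> \<in> space (PiM {1..n} (\<lambda>_. unit_law p Q0 Q1)). - k \<le> (\<Sum>i\<in>{1..n}. - 1 * indicator E (\<omega> i))}"
    unfolding sample_space_def by (auto simp: sum_negf)
  also have "measure (sample_space n p Q0 Q1) \<dots>
      \<le> exp (- (- k) + (exp (- 1) - 1) * real (card {1..n}) * (\<integral>x. indicator E x \<partial>unit_law p Q0 Q1))"
    unfolding sample_space_def
    by (rule chernoff_bound_01[OF prob_space_unit_law[OF Q0 Q1 p]]) (use E in \<open>auto simp: indicator_def\<close>)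
  finally show ?thesis
    using E by (simp add: algebra_simps)
qed

lemma sample_count_upper_tail:
  assumes "E \<in> sets (count_space UNIV \<Otimes>\<^sub>M borel)"
  shows "measure (sample_space n p Q0 Q1)
           {\<omega> \<in> space (sample_space n p Q0 Q1). k \<le> (\<Sum>i\<in>{1..n}. indicator E (\<omega> i))}
         \<le> exp (- k + (exp 1 - 1) * real n * measure (unit_law p Q0 Q1) E)"
proof -
  have E: "E \<in> sets (unit_law p Q0 Q1)" using assms sets_unit_law by blast
  have "measure (sample_space n p Q0 Q1)
           {\<omega> \<in> space (sample_space n p Q0 Q1). k \<le> (\<Sum>i\<in>{1..n}. 1 * indicator E (\<omega> i))}
      \<le> exp (- k + (exp 1 - 1) * real (card {1..n}) * (\<integral>x. indicator E x \<partial>unit_law p Q0 Q1))"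
    unfolding sample_space_def
    by (rule chernoff_bound_01[OF prob_space_unit_law[OF Q0 Q1 p]]) (use E in \<open>auto simp: indicator_def\<close>)
  then show ?thesis
    using E by simp
qed

lemma control_at_risk_count_lower_tail:
  assumes "a \<in> sets borel"
  shows "measure (sample_space n p Q0 Q1)
           {\<omega> \<in> space (sample_space n p Q0 Q1). \<not> k < control_at_risk_count a t \<omega> n}
         \<le> exp (k - (1 - exp (- 1)) * real n
                   * ((1 - p) * measure Q0 {v \<in> space Q0. fst v \<in> a \<and> t \<le> min (fst (snd v)) (snd (snd v))}))"
  using sample_count_lower_tail[OF sets_control_at_risk_units[OF assms]]
  unfolding control_at_risk_count_eq[symmetric] not_less measure_unit_law_control_at_risk_units[OF assms] .

lemma treated_count_upper_tail:
  assumes "a \<in> sets borel"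
  shows "measure (sample_space n p Q0 Q1)
           {\<omega> \<in> space (sample_space n p Q0 Q1). \<not> treated_count a \<omega> n < k}
         \<le> exp (- k + (exp 1 - 1) * real n * (p * measure Q1 {v \<in> space Q1. fst v \<in> a}))"
  using sample_count_upper_tail[OF sets_treated_units[OF assms]]
  unfolding treated_count_eq[symmetric] not_less measure_unit_law_treated_units[OF assms] .

end

section \<open>Matching and weights\<close>

lemma cell_eq:
  assumes "disjoint A" "a \<in> A" "x \<in> a"
  shows "cell A x = a"
  unfolding cell_def
proof (rule the_equality)
  show "a \<in> A \<and> x \<in> a" using assms by auto
  fix b assume "b \<in> A \<and> x \<in> b"
  then show "b = a" using assms unfolding disjoint_def by blast
qed

lemma sum_G0_cell_eq_control_at_risk_count:
  assumes disj: "disjoint A" and i: "i \<in> G1 A \<omega> n"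
  shows "cell A (Xv \<omega> i) \<in> A"
    and "(\<Sum>j\<in>G0 A \<omega> n. of_bool (Xv \<omega> j \<in> cell A (Xv \<omega> i)) * Yv \<omega> j t)
           = control_at_risk_count (cell A (Xv \<omega> i)) t \<omega> n"
proof -
  obtain a where i_treated: "i \<in> grp \<omega> n True" and a: "a \<in> A" "Xv \<omega> i \<in> a"
    using i unfolding G1_def matched_pairs_def by auto
  have cell: "cell A (Xv \<omega> i) = a" using cell_eq[OF disj a] .
  then show "cell A (Xv \<omega> i) \<in> A" using a by simp
  \<comment> \<open>every control in the cell of a matched treated unit is itself matched\<close>
  have "j \<in> G0 A \<omega> n" if "j \<in> grp \<omega> n False" "Xv \<omega> j \<in> a" for j
    using that i_treated a unfolding G0_def matched_pairs_def by force
  moreover have "G0 A \<omega> n \<subseteq> grp \<omega> n False"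
    unfolding G0_def matched_pairs_def by auto
  ultimately show "(\<Sum>j\<in>G0 A \<omega> n. of_bool (Xv \<omega> j \<in> cell A (Xv \<omega> i)) * Yv \<omega> j t)
      = control_at_risk_count (cell A (Xv \<omega> i)) t \<omega> n"
    unfolding cell control_at_risk_count_def
    by (intro sum.mono_neutral_left) (auto simp: grp_def)
qed

lemma abs_weight_le:
  assumes disj: "disjoint A" and i: "i \<in> G0 A \<omega> n" and t: "t \<le> \<tau>" and k1: "0 < k1"
    and controls: "\<forall>a\<in>A. k1 < control_at_risk_count a \<tau> \<omega> n"
    and treated: "\<forall>a\<in>A. treated_count a \<omega> n < k2"
  shows "\<bar>weight A \<omega> n i t\<bar> \<le> k2 / k1"
proof -
  obtain a where i_control: "i \<in> grp \<omega> n False" and a: "a \<in> A" "Xv \<omega> i \<in> a"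
    using i unfolding G0_def matched_pairs_def by auto
  have "i \<notin> G1 A \<omega> n"
    using i_control unfolding G1_def matched_pairs_def grp_def by auto
  then have weight: "weight A \<omega> n i t
      = ginv (control_at_risk_count a t \<omega> n) * (\<Sum>j\<in>grp \<omega> n True. of_bool (Xv \<omega> j \<in> a) * Yv \<omega> j t)"
    unfolding weight_def control_at_risk_count_def cell_eq[OF disj a] using i by simp
  have "control_at_risk_count a \<tau> \<omega> n \<le> control_at_risk_count a t \<omega> n"
    unfolding control_at_risk_count_def using t by (intro sum_mono) (auto simp: Yv_def)
  then have "k1 < control_at_risk_count a t \<omega> n"
    using controls a(1) by fastforce
  moreover have "0 \<le> (\<Sum>j\<in>grp \<omega> n True. of_bool (Xv \<omega> j \<in> a) * Yv \<omega> j t)"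
    by (intro sum_nonneg) (simp add: Yv_def)
  moreover have "(\<Sum>j\<in>grp \<omega> n True. of_bool (Xv \<omega> j \<in> a) * Yv \<omega> j t) \<le> treated_count a \<omega> n"
    unfolding treated_count_def by (intro sum_mono) (simp add: Yv_def)
  then have "(\<Sum>j\<in>grp \<omega> n True. of_bool (Xv \<omega> j \<in> a) * Yv \<omega> j t) < k2"
    using treated a(1) by fastforce
  ultimately show ?thesis
    unfolding weight ginv_def using k1 by (simp add: frac_le)
qed

section \<open>Cell masses\<close>

lemma measure_at_risk_ge:
  fixes Q :: "('a::euclidean_space \<times> real \<times> real) measure" and \<nu> :: "'a measure"
  assumes Q: "prob_space Q" "sets Q = sets borel" and \<nu>: "sets \<nu> = sets borel"
    and f: "f \<in> borel_measurable borel" and dens: "distr Q borel fst = density \<nu> (\<lambda>x. ennreal (f x))"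
    and h: "cond_surv_version Q \<tau> h" and c: "0 < c"
    and lower: "AE x in \<nu>. x \<in> a \<longrightarrow> c \<le> f x * h x" and a: "a \<in> sets borel"
  shows "c * measure \<nu> a \<le> measure Q {v \<in> space Q. fst v \<in> a \<and> \<tau> \<le> min (fst (snd v)) (snd (snd v))}"
proof (cases "emeasure \<nu> a = \<infinity>")
  case True
  then show ?thesis by (simp add: measure_def)
next
  case False
  interpret Q: prob_space Q by (rule Q(1))
  let ?D = "distr Q borel fst"
  have "fst \<in> measurable Q borel"
    using Q(2) by (simp add: measurable_cong_sets[OF Q(2) refl] borel_measurable_continuous_onI
                             continuous_on_fst continuous_on_id)
  then interpret D: prob_space ?D by (rule Q.prob_space_distr)
  have h_meas: "h \<in> borel_measurable borel" and h01: "\<And>x. 0 \<le> h x \<and> h x \<le> 1"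
    and h_eq: "measure Q {v \<in> space Q. fst v \<in> a \<and> \<tau> \<le> min (fst (snd v)) (snd (snd v))}
        = (\<integral>x. indicator a x * h x \<partial>?D)"
    using h a unfolding cond_surv_version_def by auto
  have "integrable ?D (\<lambda>x. indicator a x * h x)"
    by (rule D.integrable_const_bound[where B=1]) (use h01 h_meas a in \<open>auto simp: indicator_def\<close>)
  then have "ennreal (measure Q {v \<in> space Q. fst v \<in> a \<and> \<tau> \<le> min (fst (snd v)) (snd (snd v))})
      = (\<integral>\<^sup>+x. ennreal (indicator a x * h x) \<partial>?D)"
    unfolding h_eq by (rule nn_integral_eq_integral[symmetric]) (use h01 in auto)
  also have "\<dots> = (\<integral>\<^sup>+x. ennreal (f x) * ennreal (indicator a x * h x) \<partial>\<nu>)"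
    unfolding dens
    by (rule nn_integral_density) (use f h_meas a \<nu> in \<open>auto simp: measurable_cong_sets[OF \<nu> refl]\<close>)
  also have "\<dots> \<ge> (\<integral>\<^sup>+x. ennreal c * indicator a x \<partial>\<nu>)"
    using lower
  proof (intro nn_integral_mono_AE, eventually_elim)
    case (elim x)
    show ?case
    proof (cases "x \<in> a")
      case True
      with elim have "c \<le> f x * h x" by simp
      with True c h01[of x] show ?thesis
        by (simp add: ennreal_mult''[symmetric] ennreal_leI)
    qed simp
  qed
  also have "(\<integral>\<^sup>+x. ennreal c * indicator a x \<partial>\<nu>) = ennreal c * emeasure \<nu> a"
    using a \<nu> by (simp add: nn_integral_cmult_indicator)
  also have "\<dots> = ennreal (c * measure \<nu> a)"
    using False c by (simp add: emeasure_eq_ennreal_measure ennreal_mult'' top.not_eq_extremum)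
  finally show ?thesis
    by (simp only: ennreal_le_iff[OF measure_nonneg])
qed

lemma measure_fst_le:
  fixes Q :: "('a::euclidean_space \<times> real \<times> real) measure" and \<nu> :: "'a measure"
  assumes Q: "prob_space Q" "sets Q = sets borel" and \<nu>: "sets \<nu> = sets borel"
    and f: "f \<in> borel_measurable borel" and dens: "distr Q borel fst = density \<nu> (\<lambda>x. ennreal (f x))"
    and C: "0 \<le> C" and upper: "AE x in \<nu>. x \<in> a \<longrightarrow> f x \<le> C"
    and a: "a \<in> sets borel" "emeasure \<nu> a < \<infinity>"
  shows "measure Q {v \<in> space Q. fst v \<in> a} \<le> C * measure \<nu> a"
proof -
  interpret Q: prob_space Q by (rule Q(1))
  let ?D = "distr Q borel fst"
  have fst_meas: "fst \<in> measurable Q borel"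
    using Q(2) by (simp add: measurable_cong_sets[OF Q(2) refl] borel_measurable_continuous_onI
                             continuous_on_fst continuous_on_id)
  then interpret D: prob_space ?D by (rule Q.prob_space_distr)
  have "fst -` a \<inter> space Q = {v \<in> space Q. fst v \<in> a}" by auto
  then have "ennreal (measure Q {v \<in> space Q. fst v \<in> a}) = emeasure ?D a"
    using measure_distr[OF fst_meas a(1)] by (simp add: D.emeasure_eq_measure)
  also have "\<dots> = (\<integral>\<^sup>+x. ennreal (f x) * indicator a x \<partial>\<nu>)"
    unfolding dens
    by (rule emeasure_density) (use f a \<nu> in \<open>auto simp: measurable_cong_sets[OF \<nu> refl]\<close>)
  also have "\<dots> \<le> (\<integral>\<^sup>+x. ennreal C * indicator a x \<partial>\<nu>)"
    using upper
  proof (intro nn_integral_mono_AE, eventually_elim)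
    case (elim x)
    then show ?case by (cases "x \<in> a") (auto simp: ennreal_leI)
  qed
  also have "\<dots> = ennreal C * emeasure \<nu> a"
    using a \<nu> by (simp add: nn_integral_cmult_indicator)
  also have "\<dots> = ennreal (C * measure \<nu> a)"
    using a C by (simp add: emeasure_eq_ennreal_measure ennreal_mult'' top.not_eq_extremum)
  finally show ?thesis
    using C by (simp only: ennreal_le_iff[OF mult_nonneg_nonneg[OF C measure_nonneg]])
qed

lemma card_partition_le:
  assumes A: "finite A" and A_sets: "\<And>a. a \<in> A \<Longrightarrow> a \<in> sets \<nu>" and disj: "disjoint A"
    and fin: "emeasure \<nu> (\<Union>A) < \<infinity>" and c: "\<And>a. a \<in> A \<Longrightarrow> c \<le> measure \<nu> a"
  shows "real (card A) * c \<le> measure \<nu> (\<Union>A)"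
proof -
  have "\<Union>A \<in> fmeasurable \<nu>"
    using A A_sets fin by (intro fmeasurableI sets.finite_Union) auto
  then have "measure \<nu> (\<Union>A) = (\<Sum>a\<in>A. measure \<nu> a)"
    using A A_sets disj
    by (intro measure_Union') (auto intro: fmeasurableI2 simp: disjoint_def)
  moreover have "real (card A) * c \<le> (\<Sum>a\<in>A. measure \<nu> a)"
    using sum_mono[of A "\<lambda>_. c" "\<lambda>a. measure \<nu> a"] c by simp
  ultimately show ?thesis by simp
qed

section \<open>Asymptotics\<close>

lemma prob_Ball_tendsto_1:
  assumes M: "\<And>n. prob_space (M n)" and A: "\<And>n. finite (A n)"
    and sets: "\<And>n a. a \<in> A n \<Longrightarrow> {\<omega> \<in> space (M n). \<not> P n a \<omega>} \<in> sets (M n)"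
    and bound: "eventually (\<lambda>n. \<forall>a\<in>A n. measure (M n) {\<omega> \<in> space (M n). \<not> P n a \<omega>} \<le> r n) sequentially"
    and lim: "(\<lambda>n. real (card (A n)) * r n) \<longlonglongrightarrow> 0"
  shows "(\<lambda>n. measure (M n) {\<omega> \<in> space (M n). \<forall>a\<in>A n. P n a \<omega>}) \<longlonglongrightarrow> 1"
proof (rule tendsto_sandwich)
  have lower: "1 - real (card (A n)) * r n \<le> measure (M n) {\<omega> \<in> space (M n). \<forall>a\<in>A n. P n a \<omega>}"
    if "\<forall>a\<in>A n. measure (M n) {\<omega> \<in> space (M n). \<not> P n a \<omega>} \<le> r n" for n
  proof -
    interpret prob_space "M n" by (rule M)
    let ?U = "\<Union>a\<in>A n. {\<omega> \<in> space (M n). \<not> P n a \<omega>}"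
    have "measure (M n) ?U \<le> (\<Sum>a\<in>A n. measure (M n) {\<omega> \<in> space (M n). \<not> P n a \<omega>})"
      using A sets by (intro measure_UNION_le) auto
    also have "\<dots> \<le> real (card (A n)) * r n"
      using sum_mono[of "A n" _ "\<lambda>_. r n"] that by simp
    moreover have "{\<omega> \<in> space (M n). \<forall>a\<in>A n. P n a \<omega>} = space (M n) - ?U"
      by auto
    moreover have "?U \<in> events"
      using A sets by auto
    ultimately show ?thesis
      using prob_compl[of ?U] by simp
  qed
  show "eventually (\<lambda>n. 1 - real (card (A n)) * r n
      \<le> measure (M n) {\<omega> \<in> space (M n). \<forall>a\<in>A n. P n a \<omega>}) sequentially"
    using bound by (rule eventually_mono) (rule lower)
  show "eventually (\<lambda>n. measure (M n) {\<omega> \<in> space (M n). \<forall>a\<in>A n. P n a \<omega>} \<le> 1) sequentially"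
    using prob_space.prob_le_1[OF M] by simp
  show "(\<lambda>n. 1 - real (card (A n)) * r n) \<longlonglongrightarrow> 1"
    using tendsto_diff[OF tendsto_const lim, of 1] by simp
qed (rule tendsto_const)

lemma real_mult_powr_minus: "0 < (x::real) \<Longrightarrow> x * x powr (- \<gamma>) = x powr (1 - \<gamma>)"
  using powr_add[of x 1 "- \<gamma>"] by simp

lemma powr_mult_exp_tendsto_0:
  assumes f: "eventually (\<lambda>n. 0 \<le> f n \<and> f n \<le> K * real n powr \<gamma>) sequentially"
    and "b < a" "0 < a" "0 < c" "0 < d"
  shows "(\<lambda>n. f n * exp (d * real n powr b - c * real n powr a)) \<longlonglongrightarrow> 0"
proof -
  have "((\<lambda>x::real. x powr \<gamma> * exp (d * x powr b - c * x powr a)) \<longlongrightarrow> 0) at_top"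
    using assms(2-) by real_asymp
  from tendsto_mult_right_zero[OF filterlim_compose[OF this filterlim_real_sequentially], of K]
  have "(\<lambda>n. K * (real n powr \<gamma> * exp (d * real n powr b - c * real n powr a))) \<longlonglongrightarrow> 0"
    by (simp add: o_def)
  then show ?thesis
  proof (rule tendsto_sandwich[OF _ _ tendsto_const, rotated 2])
    show "eventually (\<lambda>n. f n * exp (d * real n powr b - c * real n powr a)
        \<le> K * (real n powr \<gamma> * exp (d * real n powr b - c * real n powr a))) sequentially"
      using f by (rule eventually_mono) (simp add: mult.assoc[symmetric])
    show "eventually (\<lambda>n. 0 \<le> f n * exp (d * real n powr b - c * real n powr a)) sequentially"
      using f by (rule eventually_mono) simp
  qed
qed

lemma prob_Int_tendsto_1:
  assumes M: "\<And>n. prob_space (M n)" and E: "\<And>n. E n \<in> sets (M n)" "\<And>n. E' n \<in> sets (M n)"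
    and lim: "(\<lambda>n. measure (M n) (E n)) \<longlonglongrightarrow> 1" "(\<lambda>n. measure (M n) (E' n)) \<longlonglongrightarrow> 1"
  shows "(\<lambda>n. measure (M n) (E n \<inter> E' n)) \<longlonglongrightarrow> 1"
proof (rule tendsto_sandwich)
  have "measure (M n) (E n) + measure (M n) (E' n) - 1 \<le> measure (M n) (E n \<inter> E' n)" for n
  proof -
    interpret prob_space "M n" by (rule M)
    have "measure (M n) (E n - E' n) \<le> measure (M n) (space (M n) - E' n)"
      using E sets.sets_into_space[OF E(1)] by (intro finite_measure_mono) auto
    then show ?thesis
      using finite_measure_Diff'[OF E(1) E(2)] prob_compl[OF E(2)] by simp
  qed
  then show "eventually (\<lambda>n. measure (M n) (E n) + measure (M n) (E' n) - 1
      \<le> measure (M n) (E n \<inter> E' n)) sequentially"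
    by simp
  show "eventually (\<lambda>n. measure (M n) (E n \<inter> E' n) \<le> 1) sequentially"
    using prob_space.prob_le_1[OF M] by simp
  show "(\<lambda>n. measure (M n) (E n) + measure (M n) (E' n) - 1) \<longlonglongrightarrow> 1"
    using tendsto_diff[OF tendsto_add[OF lim] tendsto_const, of 1] by simp
qed (rule tendsto_const)

lemma prob_tendsto_0_of_disjoint:
  assumes M: "\<And>n. prob_space (M n)" and E: "\<And>n. E n \<in> sets (M n)"
    and lim: "(\<lambda>n. measure (M n) (E n)) \<longlonglongrightarrow> 1"
    and B: "eventually (\<lambda>n. B n \<inter> E n = {}) sequentially"
  shows "(\<lambda>n. measure (M n) (B n)) \<longlonglongrightarrow> 0"
proof (rule tendsto_sandwich[OF _ _ tendsto_const])
  show "eventually (\<lambda>n. measure (M n) (B n) \<le> 1 - measure (M n) (E n)) sequentially"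
    using B
  proof eventually_elim
    case (elim n)
    interpret prob_space "M n" by (rule M)
    show ?case
    proof (cases "B n \<in> sets (M n)")
      case True
      then have "measure (M n) (B n) \<le> measure (M n) (space (M n) - E n)"
        using elim E sets.sets_into_space[OF True] by (intro finite_measure_mono) auto
      then show ?thesis using prob_compl[OF E] by simp
    qed (simp add: measure_notin_sets)
  qed
  show "(\<lambda>n. 1 - measure (M n) (E n)) \<longlonglongrightarrow> 0"
    using tendsto_diff[OF tendsto_const lim, of 1] by simp
qed simp

section \<open>Cell counts and the conditions [A3], [A4]\<close>

context
  fixes Q0 Q1 :: "('a::euclidean_space \<times> real \<times> real) measure" and p :: "nat \<Rightarrow> real"
    and A :: "nat \<Rightarrow> 'a set set" and K \<gamma> :: real
  assumes Q0: "prob_space Q0" "sets Q0 = sets borel" and Q1: "prob_space Q1" "sets Q1 = sets borel"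
    and p: "\<And>n. 0 \<le> p n" "\<And>n. p n \<le> 1"
    and A: "\<And>n. finite (A n)" and A_sets: "\<And>n a. a \<in> A n \<Longrightarrow> a \<in> sets borel"
    and card_A: "\<And>n. 1 \<le> n \<Longrightarrow> real (card (A n)) \<le> K * real n powr \<gamma>"
begin

lemma control_at_risk_counts_tendsto_1:
  assumes p_lim: "p \<longlonglongrightarrow> 0" and c: "0 < c"
    and mass: "\<And>n a. 1 \<le> n \<Longrightarrow> a \<in> A n \<Longrightarrow>
      c * real n powr (- \<gamma>) \<le> measure Q0 {v \<in> space Q0. fst v \<in> a \<and> \<tau> \<le> min (fst (snd v)) (snd (snd v))}"
    and \<delta>: "0 < \<delta>" "\<delta> < 1 - \<gamma>"
  shows "(\<lambda>n. measure (sample_space n (p n) Q0 Q1)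
           {\<omega> \<in> space (sample_space n (p n) Q0 Q1). \<forall>a\<in>A n.
              real n powr (1 - \<gamma> - \<delta>) < control_at_risk_count a \<tau> \<omega> n}) \<longlonglongrightarrow> 1"
proof (rule prob_Ball_tendsto_1[OF prob_space_sample_space[OF Q0 Q1 p] A])
  define b where "b = 1 - exp (- 1 :: real)"
  have b: "0 < b" unfolding b_def by simp
  show "{\<omega> \<in> space (sample_space n (p n) Q0 Q1). \<not> real n powr (1 - \<gamma> - \<delta>) < control_at_risk_count a \<tau> \<omega> n}
      \<in> sets (sample_space n (p n) Q0 Q1)" if "a \<in> A n" for n a
    using borel_measurable_control_at_risk_count[OF A_sets[OF that]] by measurable
  have "eventually (\<lambda>n. p n < 1 / 2) sequentially"
    by (rule order_tendstoD(2)[OF p_lim]) simp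
  with eventually_ge_at_top[of 1]
  have "eventually (\<lambda>n. 1 \<le> n \<and> p n \<le> 1 / 2) sequentially"
    by eventually_elim simp
  then show "eventually (\<lambda>n. \<forall>a\<in>A n. measure (sample_space n (p n) Q0 Q1)
      {\<omega> \<in> space (sample_space n (p n) Q0 Q1). \<not> real n powr (1 - \<gamma> - \<delta>) < control_at_risk_count a \<tau> \<omega> n}
      \<le> exp (1 * real n powr (1 - \<gamma> - \<delta>) - b * (c / 2) * real n powr (1 - \<gamma>))) sequentially"
  proof eventually_elim
    case (elim n)
    show ?case
    proof (intro ballI, rule order.trans[OF control_at_risk_count_lower_tail[OF Q0 Q1 p(1,2)]])
      fix a assume a: "a \<in> A n"
      then show "a \<in> sets borel" by (rule A_sets)
      let ?m = "measure Q0 {v \<in> space Q0. fst v \<in> a \<and> \<tau> \<le> min (fst (snd v)) (snd (snd v))}"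
      have "(c / 2) * real n powr (1 - \<gamma>) = real n * ((1 / 2) * (c * real n powr (- \<gamma>)))"
        using elim by (simp add: real_mult_powr_minus)
      also have "\<dots> \<le> real n * ((1 - p n) * ?m)"
        using mass[OF _ a] elim c by (intro mult_left_mono mult_mono) auto
      finally have "b * ((c / 2) * real n powr (1 - \<gamma>)) \<le> b * (real n * ((1 - p n) * ?m))"
        using b by (intro mult_left_mono) auto
      then show "exp (real n powr (1 - \<gamma> - \<delta>) - (1 - exp (- 1)) * real n * ((1 - p n) * ?m))
          \<le> exp (1 * real n powr (1 - \<gamma> - \<delta>) - b * (c / 2) * real n powr (1 - \<gamma>))"
        unfolding b_def by (simp add: mult.assoc)
    qed
  qed
  show "(\<lambda>n. real (card (A n)) * exp (1 * real n powr (1 - \<gamma> - \<delta>) - b * (c / 2) * real n powr (1 - \<gamma>)))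
      \<longlonglongrightarrow> 0"
    using card_A \<delta> b c
    by (intro powr_mult_exp_tendsto_0[where K = K and \<gamma> = \<gamma>] eventually_sequentiallyI[of 1]) auto
qed

lemma treated_counts_tendsto_1:
  assumes p_upper: "\<And>n. 1 \<le> n \<Longrightarrow> p n \<le> Cp * real n powr (\<beta> - 1)" and Cp: "0 < Cp"
    and mass: "\<And>n a. 1 \<le> n \<Longrightarrow> a \<in> A n \<Longrightarrow> measure Q1 {v \<in> space Q1. fst v \<in> a} \<le> C * real n powr (- \<gamma>)"
    and C: "0 < C" and \<delta>: "0 < \<delta>" "\<delta> < 1 - \<gamma>" "\<delta> < 1 - \<beta>"
  shows "(\<lambda>n. measure (sample_space n (p n) Q0 Q1)
           {\<omega> \<in> space (sample_space n (p n) Q0 Q1). \<forall>a\<in>A n.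
              treated_count a \<omega> n < real n powr (1 - \<gamma> - \<delta>)}) \<longlonglongrightarrow> 1"
proof (rule prob_Ball_tendsto_1[OF prob_space_sample_space[OF Q0 Q1 p] A])
  define d where "d = (exp 1 - 1) * (Cp * C)"
  have d: "0 < d" unfolding d_def using Cp C by simp
  show "{\<omega> \<in> space (sample_space n (p n) Q0 Q1). \<not> treated_count a \<omega> n < real n powr (1 - \<gamma> - \<delta>)}
      \<in> sets (sample_space n (p n) Q0 Q1)" if "a \<in> A n" for n a
    using borel_measurable_treated_count[OF A_sets[OF that]] by measurable
  show "eventually (\<lambda>n. \<forall>a\<in>A n. measure (sample_space n (p n) Q0 Q1)
      {\<omega> \<in> space (sample_space n (p n) Q0 Q1). \<not> treated_count a \<omega> n < real n powr (1 - \<gamma> - \<delta>)}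
      \<le> exp (d * real n powr (\<beta> - \<gamma>) - 1 * real n powr (1 - \<gamma> - \<delta>))) sequentially"
    using eventually_ge_at_top[of 1]
  proof eventually_elim
    case (elim n)
    show ?case
    proof (intro ballI, rule order.trans[OF treated_count_upper_tail[OF Q0 Q1 p(1,2)]])
      fix a assume a: "a \<in> A n"
      then show "a \<in> sets borel" by (rule A_sets)
      let ?m = "measure Q1 {v \<in> space Q1. fst v \<in> a}"
      have "real n * (p n * ?m) \<le> real n * ((Cp * real n powr (\<beta> - 1)) * (C * real n powr (- \<gamma>)))"
        using p_upper[OF elim] mass[OF elim a] p Cp by (intro mult_left_mono mult_mono) auto
      also have "\<dots> = (Cp * C) * (real n powr (\<beta> - 1) * (real n * real n powr (- \<gamma>)))"
        by (simp add: algebra_simps)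
      also have "\<dots> = (Cp * C) * real n powr (\<beta> - \<gamma>)"
        using elim by (simp add: real_mult_powr_minus flip: powr_add)
      finally have "(exp 1 - 1) * (real n * (p n * ?m)) \<le> d * real n powr (\<beta> - \<gamma>)"
        unfolding d_def by (simp add: mult.assoc mult_left_mono)
      then show "exp (- (real n powr (1 - \<gamma> - \<delta>)) + (exp 1 - 1) * real n * (p n * ?m))
          \<le> exp (d * real n powr (\<beta> - \<gamma>) - 1 * real n powr (1 - \<gamma> - \<delta>))"
        by (simp add: mult.assoc)
    qed
  qed
  show "(\<lambda>n. real (card (A n)) * exp (d * real n powr (\<beta> - \<gamma>) - 1 * real n powr (1 - \<gamma> - \<delta>)))
      \<longlonglongrightarrow> 0"
    using card_A \<delta> d
    by (intro powr_mult_exp_tendsto_0[where K = K and \<gamma> = \<gamma>] eventually_sequentiallyI[of 1]) auto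
qed

end

context
  fixes Q0 Q1 :: "('a::euclidean_space \<times> real \<times> real) measure" and p :: "nat \<Rightarrow> real"
    and A :: "nat \<Rightarrow> 'a set set"
  assumes S: "\<And>n. prob_space (sample_space n (p n) Q0 Q1)"
    and A: "\<And>n. finite (A n)" and A_sets: "\<And>n a. a \<in> A n \<Longrightarrow> a \<in> sets borel"
    and A_disj: "\<And>n. disjoint (A n)"
begin

lemma unmatched_treated_tendsto_0:
  assumes k: "\<And>n. 0 \<le> k n"
    and lim: "(\<lambda>n. measure (sample_space n (p n) Q0 Q1)
      {\<omega> \<in> space (sample_space n (p n) Q0 Q1). \<forall>a\<in>A n. k n < control_at_risk_count a \<tau> \<omega> n}) \<longlonglongrightarrow> 1"
  shows "(\<lambda>n. measure (sample_space n (p n) Q0 Q1)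
      {\<omega> \<in> space (sample_space n (p n) Q0 Q1). \<exists>i\<in>G1 (A n) \<omega> n.
         (\<Sum>j\<in>G0 (A n) \<omega> n. of_bool (Xv \<omega> j \<in> cell (A n) (Xv \<omega> i)) * Yv \<omega> j \<tau>) = 0}) \<longlonglongrightarrow> 0"
  using S sets_Collect_Ball_control_at_risk_count[OF A A_sets] lim
proof (rule prob_tendsto_0_of_disjoint)
  show "eventually (\<lambda>n. {\<omega> \<in> space (sample_space n (p n) Q0 Q1). \<exists>i\<in>G1 (A n) \<omega> n.
      (\<Sum>j\<in>G0 (A n) \<omega> n. of_bool (Xv \<omega> j \<in> cell (A n) (Xv \<omega> i)) * Yv \<omega> j \<tau>) = 0}
    \<inter> {\<omega> \<in> space (sample_space n (p n) Q0 Q1). \<forall>a\<in>A n. k n < control_at_risk_count a \<tau> \<omega> n} = {})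
    sequentially"
  proof (intro always_eventually allI)
    fix n
    have "(\<Sum>j\<in>G0 (A n) \<omega> n. of_bool (Xv \<omega> j \<in> cell (A n) (Xv \<omega> i)) * Yv \<omega> j \<tau>) \<noteq> 0"
      if "\<forall>a\<in>A n. k n < control_at_risk_count a \<tau> \<omega> n" "i \<in> G1 (A n) \<omega> n" for \<omega> i
      using that(1) sum_G0_cell_eq_control_at_risk_count[OF A_disj that(2)] k[of n]
      by (metis less_le_trans order.irrefl)
    then show "{\<omega> \<in> space (sample_space n (p n) Q0 Q1). \<exists>i\<in>G1 (A n) \<omega> n.
        (\<Sum>j\<in>G0 (A n) \<omega> n. of_bool (Xv \<omega> j \<in> cell (A n) (Xv \<omega> i)) * Yv \<omega> j \<tau>) = 0}
      \<inter> {\<omega> \<in> space (sample_space n (p n) Q0 Q1). \<forall>a\<in>A n. k n < control_at_risk_count a \<tau> \<omega> n} = {}"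
      by blast
  qed
qed

lemma large_weights_tendsto_0:
  assumes \<epsilon>: "0 < \<epsilon>" and k1: "eventually (\<lambda>n. 0 < k1 n) sequentially"
    and ratio: "(\<lambda>n. k2 n / k1 n) \<longlonglongrightarrow> 0"
    and lim1: "(\<lambda>n. measure (sample_space n (p n) Q0 Q1)
      {\<omega> \<in> space (sample_space n (p n) Q0 Q1). \<forall>a\<in>A n. k1 n < control_at_risk_count a \<tau> \<omega> n}) \<longlonglongrightarrow> 1"
    and lim2: "(\<lambda>n. measure (sample_space n (p n) Q0 Q1)
      {\<omega> \<in> space (sample_space n (p n) Q0 Q1). \<forall>a\<in>A n. treated_count a \<omega> n < k2 n}) \<longlonglongrightarrow> 1"
  shows "(\<lambda>n. measure (sample_space n (p n) Q0 Q1)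
      {\<omega> \<in> space (sample_space n (p n) Q0 Q1).
         \<exists>t\<in>{0..\<tau>}. \<exists>i\<in>G0 (A n) \<omega> n. \<bar>weight (A n) \<omega> n i t\<bar> > \<epsilon>}) \<longlonglongrightarrow> 0"
  using S _ prob_Int_tendsto_1[OF S sets_Collect_Ball_control_at_risk_count[OF A A_sets]
      sets_Collect_Ball_treated_count[OF A A_sets] lim1 lim2]
proof (rule prob_tendsto_0_of_disjoint)
  show "{\<omega> \<in> space (sample_space n (p n) Q0 Q1). \<forall>a\<in>A n. k1 n < control_at_risk_count a \<tau> \<omega> n}
      \<inter> {\<omega> \<in> space (sample_space n (p n) Q0 Q1). \<forall>a\<in>A n. treated_count a \<omega> n < k2 n}
      \<in> sets (sample_space n (p n) Q0 Q1)" for n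
    using sets_Collect_Ball_control_at_risk_count[of "A n"] sets_Collect_Ball_treated_count[of "A n"]
      A A_sets by blast
  show "eventually (\<lambda>n. {\<omega> \<in> space (sample_space n (p n) Q0 Q1).
         \<exists>t\<in>{0..\<tau>}. \<exists>i\<in>G0 (A n) \<omega> n. \<bar>weight (A n) \<omega> n i t\<bar> > \<epsilon>}
      \<inter> ({\<omega> \<in> space (sample_space n (p n) Q0 Q1). \<forall>a\<in>A n. k1 n < control_at_risk_count a \<tau> \<omega> n}
         \<inter> {\<omega> \<in> space (sample_space n (p n) Q0 Q1). \<forall>a\<in>A n. treated_count a \<omega> n < k2 n}) = {})
    sequentially"
    using k1 order_tendstoD(2)[OF ratio \<epsilon>]
  proof eventually_elim
    case (elim n)
    have "\<not> \<epsilon> < \<bar>weight (A n) \<omega> n i t\<bar>"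
      if "\<forall>a\<in>A n. k1 n < control_at_risk_count a \<tau> \<omega> n" "\<forall>a\<in>A n. treated_count a \<omega> n < k2 n"
        "t \<in> {0..\<tau>}" "i \<in> G0 (A n) \<omega> n" for \<omega> i t
    proof -
      have "\<bar>weight (A n) \<omega> n i t\<bar> \<le> k2 n / k1 n"
        by (rule abs_weight_le[OF A_disj that(4) _ _ that(1,2)]) (use that(3) elim in auto)
      then show ?thesis using elim by simp
    qed
    then show ?case
      by blast
  qed
qed

end

theorem mainTheorem13:
  fixes Q0 Q1 :: "('a::euclidean_space \<times> real \<times> real) measure"
    and p :: "nat \<Rightarrow> real"
    and \<nu> :: "'a measure"
    and f0 f1 :: "'a \<Rightarrow> real"
    and Xc :: "'a set"
    and A :: "nat \<Rightarrow> 'a set set"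
    and \<tau> \<beta> \<theta> :: real
    and dbar :: nat
  assumes Q0_prob: "prob_space Q0" and Q0_sets: "sets Q0 = sets borel"
    and Q1_prob: "prob_space Q1" and Q1_sets: "sets Q1 = sets borel"
    and TU_pos0: "AE v in Q0. 0 < fst (snd v) \<and> 0 < snd (snd v)"
    and TU_pos1: "AE v in Q1. 0 < fst (snd v) \<and> 0 < snd (snd v)"
    and p_range: "\<And>n. 0 \<le> p n \<and> p n \<le> 1"
    and tau_pos: "0 < \<tau>"
    and Xc_compact: "compact Xc"
    \<comment> \<open>the partitions\<close>
    and A_finite: "\<And>n. finite (A n)"
    and A_meas: "\<And>n a. a \<in> A n \<Longrightarrow> a \<in> sets borel"
    and A_disj: "\<And>n. disjoint (A n)"
    and A_cover: "\<And>n. \<Union> (A n) = Xc"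
    \<comment> \<open>[B1]\<close>
    and B1: "0 < \<beta>" "\<beta> < 1" "0 < \<theta>" "\<theta> < 1" "1 \<le> dbar" "dbar \<le> DIM('a)"
            "\<beta> < 2 * \<theta>" "real dbar * \<theta> < 1"
    \<comment> \<open>[B2]\<close>
    and B2: "\<exists>c C. 0 < c \<and> 0 < C \<and>
               (\<forall>n\<ge>1. c * real n powr (\<beta> - 1) \<le> p n \<and> p n \<le> C * real n powr (\<beta> - 1))"
    \<comment> \<open>[B3]\<close>
    and nu_sets: "sets \<nu> = sets borel" and nu_sigma: "sigma_finite_measure \<nu>"
    and nu_Xc: "emeasure \<nu> Xc < \<infinity>"
    and f0_meas: "f0 \<in> borel_measurable borel" and f0_nonneg: "\<And>x. 0 \<le> f0 x"
    and f1_meas: "f1 \<in> borel_measurable borel" and f1_nonneg: "\<And>x. 0 \<le> f1 x"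
    and dens0: "distr Q0 borel fst = density \<nu> (\<lambda>x. ennreal (f0 x))"
    and dens1: "distr Q1 borel fst = density \<nu> (\<lambda>x. ennreal (f1 x))"
    and B3_sup: "\<exists>C. AE x in \<nu>. x \<in> Xc \<longrightarrow> f1 x \<le> C"
    and B3_inf: "\<exists>h c. cond_surv_version Q0 \<tau> h \<and> 0 < c \<and>
                       (AE x in \<nu>. x \<in> Xc \<longrightarrow> c \<le> f0 x * h x)"
    \<comment> \<open>[B5]\<close>
    and B5_diam: "\<exists>C. \<forall>n\<ge>1. \<forall>a\<in>A n. diameter a \<le> C * real n powr (- \<theta>)"
    and B5_meas: "\<exists>c C. 0 < c \<and> 0 < C \<and> (\<forall>n\<ge>1. \<forall>a\<in>A n.
                     c * real n powr (- (real dbar * \<theta>)) \<le> measure \<nu> a \<and>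
                     measure \<nu> a \<le> C * real n powr (- (real dbar * \<theta>)))"
  shows
    "(\<forall>\<delta>' \<delta>. 0 < \<delta>' \<and> \<delta>' < \<delta> \<and> \<delta> < min (1 - real dbar * \<theta>) (1 - \<beta>) \<longrightarrow>
        ((\<lambda>n. measure (sample_space n (p n) Q0 Q1)
            {\<omega> \<in> space (sample_space n (p n) Q0 Q1).
               \<forall>a\<in>A n. (\<Sum>i\<in>grp \<omega> n False. of_bool (Xv \<omega> i \<in> a) * Yv \<omega> i \<tau>)
                          > real n powr (1 - real dbar * \<theta> - \<delta>')}) \<longlonglongrightarrow> 1)
      \<and> ((\<lambda>n. measure (sample_space n (p n) Q0 Q1)
            {\<omega> \<in> space (sample_space n (p n) Q0 Q1).
               \<forall>a\<in>A n. (\<Sum>i\<in>grp \<omega> n True. of_bool (Xv \<omega> i \<in> a) :: real)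
                          < real n powr (1 - real dbar * \<theta> - \<delta>)}) \<longlonglongrightarrow> 1))
     \<and> ((\<lambda>n. measure (sample_space n (p n) Q0 Q1)
            {\<omega> \<in> space (sample_space n (p n) Q0 Q1).
               \<exists>i\<in>G1 (A n) \<omega> n.
                 (\<Sum>j\<in>G0 (A n) \<omega> n. of_bool (Xv \<omega> j \<in> cell (A n) (Xv \<omega> i)) * Yv \<omega> j \<tau>) = 0})
          \<longlonglongrightarrow> 0)
     \<and> (\<forall>\<epsilon>>0. (\<lambda>n. measure (sample_space n (p n) Q0 Q1)
            {\<omega> \<in> space (sample_space n (p n) Q0 Q1).
               \<exists>t\<in>{0..\<tau>}. \<exists>i\<in>G0 (A n) \<omega> n. \<bar>weight (A n) \<omega> n i t\<bar> > \<epsilon>})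
          \<longlonglongrightarrow> 0)"
proof -
  let ?\<gamma> = "real dbar * \<theta>"
  have p: "\<And>n. 0 \<le> p n" "\<And>n. p n \<le> 1" using p_range by auto
  note S = prob_space_sample_space[OF Q0_prob Q0_sets Q1_prob Q1_sets p]
  obtain Cp where Cp: "0 < Cp" and p_upper: "\<And>n. 1 \<le> n \<Longrightarrow> p n \<le> Cp * real n powr (\<beta> - 1)"
    using B2 by blast
  obtain C1 where C1: "AE x in \<nu>. x \<in> Xc \<longrightarrow> f1 x \<le> C1"
    using B3_sup by blast
  obtain h c0 where h: "cond_surv_version Q0 \<tau> h" and c0: "0 < c0"
    and h_lower: "AE x in \<nu>. x \<in> Xc \<longrightarrow> c0 \<le> f0 x * h x"
    using B3_inf by blast
  obtain cv Cv where cv: "0 < cv" and Cv: "0 < Cv"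
    and mass: "\<And>n a. 1 \<le> n \<Longrightarrow> a \<in> A n \<Longrightarrow>
      cv * real n powr (- ?\<gamma>) \<le> measure \<nu> a \<and> measure \<nu> a \<le> Cv * real n powr (- ?\<gamma>)"
    using B5_meas by blast
  have cell_Xc: "a \<subseteq> Xc" if "a \<in> A n" for a n
    using A_cover[of n] that by auto
  have Xc_sets: "Xc \<in> sets \<nu>"
    unfolding A_cover[of 0, symmetric] nu_sets using A_finite A_meas by (intro sets.finite_Union) auto
  have Xc_finite: "emeasure \<nu> (\<Union>(A n)) < \<infinity>" for n
    using A_cover nu_Xc by simp
  have card: "real (card (A n)) \<le> measure \<nu> Xc / cv * real n powr ?\<gamma>" if n: "1 \<le> n" for n
  proof -
    have "real (card (A n)) * (cv * real n powr (- ?\<gamma>)) \<le> measure \<nu> Xc"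
      using card_partition_le[OF A_finite _ A_disj Xc_finite] mass[OF n] A_meas nu_sets A_cover by auto
    then show ?thesis
      using cv n by (simp add: powr_minus field_simps)
  qed
  have p_lim: "p \<longlonglongrightarrow> 0"
  proof (rule tendsto_sandwich[OF _ _ tendsto_const])
    show "(\<lambda>n. Cp * real n powr (\<beta> - 1)) \<longlonglongrightarrow> 0"
      using B1(2) by real_asymp
  qed (use p p_upper in \<open>auto intro: eventually_sequentiallyI[of 1]\<close>)
  have Q0_mass: "c0 * cv * real n powr (- ?\<gamma>)
      \<le> measure Q0 {v \<in> space Q0. fst v \<in> a \<and> \<tau> \<le> min (fst (snd v)) (snd (snd v))}"
    if "1 \<le> n" "a \<in> A n" for n a
  proof -
    have a_lower: "AE x in \<nu>. x \<in> a \<longrightarrow> c0 \<le> f0 x * h x"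
      using h_lower cell_Xc[OF that(2)] by (auto elim: eventually_mono)
    have "c0 * cv * real n powr (- ?\<gamma>) \<le> c0 * measure \<nu> a"
      using mass[OF that] c0 by (simp add: mult.assoc)
    also have "\<dots> \<le> measure Q0 {v \<in> space Q0. fst v \<in> a \<and> \<tau> \<le> min (fst (snd v)) (snd (snd v))}"
      by (rule measure_at_risk_ge[OF Q0_prob Q0_sets nu_sets f0_meas dens0 h c0 a_lower A_meas[OF that(2)]])
    finally show ?thesis .
  qed
  have Q1_mass: "measure Q1 {v \<in> space Q1. fst v \<in> a} \<le> max C1 1 * Cv * real n powr (- ?\<gamma>)"
    if "1 \<le> n" "a \<in> A n" for n a
  proof -
    have "AE x in \<nu>. x \<in> a \<longrightarrow> f1 x \<le> max C1 1"
      using C1 cell_Xc[OF that(2)] by (auto elim: eventually_mono)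
    moreover have "emeasure \<nu> a < \<infinity>"
      using emeasure_mono[OF cell_Xc[OF that(2)] Xc_sets] nu_Xc by simp
    ultimately have "measure Q1 {v \<in> space Q1. fst v \<in> a} \<le> max C1 1 * measure \<nu> a"
      by (intro measure_fst_le[OF Q1_prob Q1_sets nu_sets f1_meas dens1] A_meas[OF that(2)]) auto
    also have "\<dots> \<le> max C1 1 * Cv * real n powr (- ?\<gamma>)"
      using mass[OF that] by (simp add: mult.assoc mult_left_mono)
    finally show ?thesis .
  qed
  have controls: "(\<lambda>n. measure (sample_space n (p n) Q0 Q1)
      {\<omega> \<in> space (sample_space n (p n) Q0 Q1). \<forall>a\<in>A n.
         real n powr (1 - ?\<gamma> - \<delta>) < control_at_risk_count a \<tau> \<omega> n}) \<longlonglongrightarrow> 1"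
    if "0 < \<delta>" "\<delta> < 1 - ?\<gamma>" for \<delta>
    using control_at_risk_counts_tendsto_1[OF Q0_prob Q0_sets Q1_prob Q1_sets p A_finite A_meas card
        p_lim _ Q0_mass that] c0 cv by simp
  have treated: "(\<lambda>n. measure (sample_space n (p n) Q0 Q1)
      {\<omega> \<in> space (sample_space n (p n) Q0 Q1). \<forall>a\<in>A n.
         treated_count a \<omega> n < real n powr (1 - ?\<gamma> - \<delta>)}) \<longlonglongrightarrow> 1"
    if "0 < \<delta>" "\<delta> < 1 - ?\<gamma>" "\<delta> < 1 - \<beta>" for \<delta>
    using treated_counts_tendsto_1[OF Q0_prob Q0_sets Q1_prob Q1_sets p A_finite A_meas card
        p_upper Cp Q1_mass _ that] Cv by simp
  define m where "m = min (1 - ?\<gamma>) (1 - \<beta>)"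
  have m: "0 < m / 4" "m / 4 < 1 - ?\<gamma>" "0 < m / 2" "m / 2 < 1 - ?\<gamma>" "m / 2 < 1 - \<beta>"
    using B1 unfolding m_def by auto
  have ratio: "(\<lambda>n. real n powr (1 - ?\<gamma> - m / 2) / real n powr (1 - ?\<gamma> - m / 4)) \<longlonglongrightarrow> 0"
    using m(1) by real_asymp
  note unmatched = unmatched_treated_tendsto_0[OF S A_finite A_meas A_disj _ controls[OF m(3,4)]]
  note weights = large_weights_tendsto_0[OF S A_finite A_meas A_disj _ _ ratio
      controls[OF m(1,2)] treated[OF m(3-5)]]
  show ?thesis
    using controls treated unmatched weights eventually_gt_at_top[of 0]
    unfolding control_at_risk_count_def treated_count_def
    by (auto simp: min_less_iff_conj)
qed

end
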